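(* Let $X,Y$ be non-empty subsets of $A^+$, and say that $XY$ is a strong alt-induced code (via $(X,Y)$) when $(X,Y)$ is a strong alternative code. (i) $XY$ is a prefix strong alt-induced code via $(X,Y)$ if and only if $X$ is a prefix code and $Y$ is a bifix code; and $XY$ is a maximal prefix strong alt-induced code via $(X,Y)$ if and only if $X$ is a maximal prefix code and $Y$ is both a maximal prefix code and a bifix code. (ii) $XY$ is a suffix strong alt-induced code via $(X,Y)$ if and only if $X$ is a bifix code and $Y$ is a suffix code; and $XY$ is a maximal suffix strong alt-induced code via $(X,Y)$ if and only if $X$ is both a maximal suffix code and a bifix code and $Y$ is a maximal suffix code. (iii) $XY$ is a bifix (resp. thin maximal bifix) strong alt-induced code via $(X,Y)$ if and only if $X$ and $Y$ are bifix (resp. thin maximal bifix) codes.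
   Context: $A$ is a finite alphabet, $A^*$ the set of words, $A^+$ the non-empty words, $XY=\{xy:x\in X,y\in Y\}$. For $X,Z\subseteq A^*$: $X^{-1}Z=\{u\in A^*: xu\in Z \text{ for some } x\in X\}$, $ZY^{-1}=\{u\in A^*: uy\in Z\text{ for some } y\in Y\}$. A code is a subset of $A^+$ in which every word has at most one factorization into its elements. A prefix (suffix) code is a subset of $A^+$ in which no word is a proper prefix (suffix) of another; a bifix code is both; such a code is maximal if not properly contained in another prefix (suffix, bifix) code over $A$. A set is thin if some word of $A^*$ is not a factor of any of its words. For non-empty $X,Y\subseteq A^+$, $(X,Y)$ is an alternative code if $XY$ is a code and each element of $XY$ has exactly one factorization $xy$ with $x\in X,y\in Y$ (equivalently, no word admits two different similar alternative factorizations on $(X,Y)$). It is a strong alternative code if moreover $X^{-1}(XY)\subseteq Y$ and $(XY)Y^{-1}\subseteq X$. A prefix (maximal prefix, suffix, ...) strong alt-induced code is a strong alt-induced code that is also a prefix (maximal prefix, suffix, ...) code. *)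

theory Defs
  imports "HOL-Library.Sublist"
begin

text \<open>Words over a finite alphabet: the alphabet is the type 'a (class finite),
  words are lists. A^+ is the set of non-empty lists.\<close>

definition conc :: "'a list set \<Rightarrow> 'a list set \<Rightarrow> 'a list set" where
  "conc X Y = {x @ y | x y. x \<in> X \<and> y \<in> Y}"

definition lquot :: "'a list set \<Rightarrow> 'a list set \<Rightarrow> 'a list set" where
  "lquot X Z = {u. \<exists>x\<in>X. x @ u \<in> Z}"

definition rquot :: "'a list set \<Rightarrow> 'a list set \<Rightarrow> 'a list set" where
  "rquot Z Y = {u. \<exists>y\<in>Y. u @ y \<in> Z}"

definition code :: "'a list set \<Rightarrow> bool" where
  "code X \<longleftrightarrow> [] \<notin> X \<and>
     (\<forall>xs ys. set xs \<subseteq> X \<longrightarrow> set ys \<subseteq> X \<longrightarrow> concat xs = concat ys \<longrightarrow> xs = ys)"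

definition prefix_code :: "'a list set \<Rightarrow> bool" where
  "prefix_code X \<longleftrightarrow> [] \<notin> X \<and> (\<forall>u\<in>X. \<forall>v\<in>X. strict_prefix u v \<longrightarrow> False)"

definition suffix_code :: "'a list set \<Rightarrow> bool" where
  "suffix_code X \<longleftrightarrow> [] \<notin> X \<and> (\<forall>u\<in>X. \<forall>v\<in>X. strict_suffix u v \<longrightarrow> False)"

definition bifix_code :: "'a list set \<Rightarrow> bool" where
  "bifix_code X \<longleftrightarrow> prefix_code X \<and> suffix_code X"

definition maximal_prefix_code :: "'a list set \<Rightarrow> bool" where
  "maximal_prefix_code X \<longleftrightarrow> prefix_code X \<and> (\<forall>Z. prefix_code Z \<and> X \<subseteq> Z \<longrightarrow> Z = X)"

definition maximal_suffix_code :: "'a list set \<Rightarrow> bool" where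
  "maximal_suffix_code X \<longleftrightarrow> suffix_code X \<and> (\<forall>Z. suffix_code Z \<and> X \<subseteq> Z \<longrightarrow> Z = X)"

definition maximal_bifix_code :: "'a list set \<Rightarrow> bool" where
  "maximal_bifix_code X \<longleftrightarrow> bifix_code X \<and> (\<forall>Z. bifix_code Z \<and> X \<subseteq> Z \<longrightarrow> Z = X)"

definition thin :: "'a list set \<Rightarrow> bool" where
  "thin X \<longleftrightarrow> (\<exists>w. \<forall>x\<in>X. \<not> sublist w x)"

definition alternative_code :: "'a list set \<Rightarrow> 'a list set \<Rightarrow> bool" where
  "alternative_code X Y \<longleftrightarrow>
     X \<noteq> {} \<and> Y \<noteq> {} \<and> [] \<notin> X \<and> [] \<notin> Y \<and> code (conc X Y) \<and>
     (\<forall>x\<in>X. \<forall>y\<in>Y. \<forall>x'\<in>X. \<forall>y'\<in>Y. x @ y = x' @ y' \<longrightarrow> x = x' \<and> y = y')"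

definition strong_alternative_code :: "'a list set \<Rightarrow> 'a list set \<Rightarrow> bool" where
  "strong_alternative_code X Y \<longleftrightarrow>
     alternative_code X Y \<and> lquot X (conc X Y) \<subseteq> Y \<and> rquot (conc X Y) Y \<subseteq> X"

end

theory Submission
  imports Defs
begin

text \<open>Parts (i) and (ii) rest on two observations: \<open>(X, Y)\<close> is a strong alternative code
  exactly when \<open>X\<close> is a prefix code, \<open>Y\<close> a suffix code and \<open>XY\<close> a code; and a prefix code is
  maximal exactly when every word is prefix-comparable with one of its elements, a property
  that holds for \<open>XY\<close> iff it holds for \<open>X\<close> and for \<open>Y\<close>. For part (iii) it remains to see that a
  thin maximal bifix code \<open>X\<close> is a maximal prefix code. It is prefix- or suffix-complete.
  If it were suffix-complete but some word \<open>u\<close> were prefix-incomparable with all its elements,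
  the words \<open>p u q\<close> with \<open>p \<in> X\<^sup>*\<close> would be pairwise distinct, so \<open>X\<^sup>*\<close> would have summable
  density; yet if \<open>w\<close> is a factor of no element of \<open>X\<close>, suffix-completeness writes every word
  \<open>w v\<close> as \<open>s y\<close> with \<open>y \<in> X\<^sup>*\<close> and \<open>|s| < |w|\<close>, so that density cannot decay.\<close>

lemma prefix_code_prefix_eq:
  "prefix_code X \<Longrightarrow> x \<in> X \<Longrightarrow> x' \<in> X \<Longrightarrow> prefix x x' \<Longrightarrow> x = x'"
  unfolding prefix_code_def strict_prefix_def by blast

lemma suffix_code_suffix_eq:
  "suffix_code X \<Longrightarrow> x \<in> X \<Longrightarrow> x' \<in> X \<Longrightarrow> suffix x x' \<Longrightarrow> x = x'"
  unfolding suffix_code_def strict_suffix_def by blast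

lemma prefix_code_append_cancel:
  assumes "prefix_code X" "x \<in> X" "x' \<in> X" "x @ u = x' @ u'"
  shows "x = x' \<and> u = u'"
proof -
  have "prefix x x' \<or> prefix x' x"
    using assms(4) by (metis prefixI prefix_same_cases)
  then have "x = x'"
    using prefix_code_prefix_eq[OF assms(1)] assms(2,3) by metis
  then show ?thesis using assms(4) by simp
qed

lemma suffix_code_append_cancel:
  assumes "suffix_code X" "y \<in> X" "y' \<in> X" "u @ y = u' @ y'"
  shows "y = y' \<and> u = u'"
proof -
  have "suffix y y' \<or> suffix y' y"
    using assms(4) by (metis suffixI suffix_same_cases)
  then have "y = y'"
    using suffix_code_suffix_eq[OF assms(1)] assms(2,3) by metis
  then show ?thesis using assms(4) by simp
qed

lemma concat_eq_Nil_imp_Nil: "[] \<notin> X \<Longrightarrow> set xs \<subseteq> X \<Longrightarrow> concat xs = [] \<Longrightarrow> xs = []"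
  by (cases xs) auto

lemma prefix_code_imp_code:
  assumes "prefix_code X"
  shows "code X"
proof -
  have ne: "[] \<notin> X" using assms prefix_code_def by blast
  have "xs = ys" if "set xs \<subseteq> X" "set ys \<subseteq> X" "concat xs = concat ys" for xs ys
    using that
  proof (induction xs arbitrary: ys)
    case Nil
    then show ?case using concat_eq_Nil_imp_Nil[OF ne, of ys] by simp
  next
    case (Cons a as)
    then obtain b bs where ys: "ys = b # bs"
      using concat_eq_Nil_imp_Nil[OF ne, of "a # as"] by (cases ys) auto
    with Cons.prems prefix_code_append_cancel[OF assms, of a b "concat as" "concat bs"]
    have "a = b" "concat as = concat bs" by auto
    with Cons ys show ?case by simp
  qed
  with ne show ?thesis unfolding code_def by blast
qed

lemma suffix_code_imp_code:
  assumes "suffix_code X"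
  shows "code X"
proof -
  have ne: "[] \<notin> X" using assms suffix_code_def by blast
  have "xs = ys" if "set xs \<subseteq> X" "set ys \<subseteq> X" "concat xs = concat ys" for xs ys
    using that
  proof (induction xs arbitrary: ys rule: rev_induct)
    case Nil
    then show ?case using concat_eq_Nil_imp_Nil[OF ne, of ys] by simp
  next
    case (snoc a as)
    then obtain bs b where ys: "ys = bs @ [b]"
      using concat_eq_Nil_imp_Nil[OF ne, of "as @ [a]"] by (cases ys rule: rev_exhaust) auto
    with snoc.prems suffix_code_append_cancel[OF assms, of a b "concat as" "concat bs"]
    have "a = b" "concat as = concat bs" by auto
    with snoc ys show ?case by simp
  qed
  with ne show ?thesis unfolding code_def by blast
qed

lemma conc_memI: "x \<in> X \<Longrightarrow> y \<in> Y \<Longrightarrow> x @ y \<in> conc X Y"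
  unfolding conc_def by blast

lemma conc_memE:
  assumes "z \<in> conc X Y"
  obtains x y where "z = x @ y" "x \<in> X" "y \<in> Y"
  using assms unfolding conc_def by blast

lemma prefix_code_conc:
  assumes "prefix_code X" "prefix_code Y"
  shows "prefix_code (conc X Y)"
  unfolding prefix_code_def
proof (intro conjI ballI impI)
  show "[] \<notin> conc X Y"
    using assms unfolding prefix_code_def conc_def by auto
  fix u v
  assume "u \<in> conc X Y" "v \<in> conc X Y" "strict_prefix u v"
  then obtain x y x' y' q where xy: "x \<in> X" "y \<in> Y" "x' \<in> X" "y' \<in> Y"
    and v: "x' @ y' = x @ y @ q" "q \<noteq> []"
    by (auto elim!: conc_memE simp: strict_prefix_def prefix_def)
  then have "y' = y @ q"
    using prefix_code_append_cancel[OF assms(1), of x' x y' "y @ q"] by auto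
  then show False
    using prefix_code_prefix_eq[OF assms(2) xy(2,4)] v(2) by auto
qed

lemma suffix_code_conc:
  assumes "suffix_code X" "suffix_code Y"
  shows "suffix_code (conc X Y)"
  unfolding suffix_code_def
proof (intro conjI ballI impI)
  show "[] \<notin> conc X Y"
    using assms unfolding suffix_code_def conc_def by auto
  fix u v
  assume "u \<in> conc X Y" "v \<in> conc X Y" "strict_suffix u v"
  then obtain x y x' y' q where xy: "x \<in> X" "y \<in> Y" "x' \<in> X" "y' \<in> Y"
    and v: "x' @ y' = (q @ x) @ y" "q \<noteq> []"
    by (auto elim!: conc_memE simp: strict_suffix_def suffix_def)
  then have "x' = q @ x"
    using suffix_code_append_cancel[OF assms(2), of y' y x' "q @ x"] by auto
  then show False
    using suffix_code_suffix_eq[OF assms(1) xy(1,3)] v(2) by (simp add: suffix_def)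
qed

lemma prefix_code_conc_imp_prefix_code_right:
  assumes "prefix_code (conc X Y)" "X \<noteq> {}" "[] \<notin> Y"
  shows "prefix_code Y"
  unfolding prefix_code_def
proof (intro conjI ballI impI assms(3))
  obtain x where "x \<in> X" using assms(2) by blast
  fix y y'
  assume y: "y \<in> Y" "y' \<in> Y" "strict_prefix y y'"
  then have "prefix (x @ y) (x @ y')" by simp
  then have "x @ y = x @ y'"
    using prefix_code_prefix_eq[OF assms(1)] conc_memI[OF \<open>x \<in> X\<close>] y(1,2) by blast
  then show False using y(3) by simp
qed

lemma suffix_code_conc_imp_suffix_code_left:
  assumes "suffix_code (conc X Y)" "Y \<noteq> {}" "[] \<notin> X"
  shows "suffix_code X"
  unfolding suffix_code_def
proof (intro conjI ballI impI assms(3))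
  obtain y where "y \<in> Y" using assms(2) by blast
  fix x x'
  assume x: "x \<in> X" "x' \<in> X" "strict_suffix x x'"
  then have "suffix (x @ y) (x' @ y)" by (auto simp: strict_suffix_def suffix_def)
  then have "x @ y = x' @ y"
    using suffix_code_suffix_eq[OF assms(1)] conc_memI[OF _ \<open>y \<in> Y\<close>] x(1,2) by blast
  then show False using x(3) by simp
qed

section \<open>Strong alternative codes\<close>

lemma strong_alternative_code_iff:
  "strong_alternative_code X Y \<longleftrightarrow>
     X \<noteq> {} \<and> Y \<noteq> {} \<and> prefix_code X \<and> suffix_code Y \<and> code (conc X Y)"
proof
  assume sa: "strong_alternative_code X Y"
  then have ne: "X \<noteq> {}" "Y \<noteq> {}" "[] \<notin> X" "[] \<notin> Y"
    and unique: "\<forall>x\<in>X. \<forall>y\<in>Y. \<forall>x'\<in>X. \<forall>y'\<in>Y. x @ y = x' @ y' \<longrightarrow> x = x' \<and> y = y'"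
    and lq: "lquot X (conc X Y) \<subseteq> Y" and rq: "rquot (conc X Y) Y \<subseteq> X"
    unfolding strong_alternative_code_def alternative_code_def by simp_all
  obtain x0 y0 where x0: "x0 \<in> X" and y0: "y0 \<in> Y" using ne by blast
  have "prefix_code X"
    unfolding prefix_code_def
  proof (intro conjI ballI impI ne)
    fix x x'
    assume x: "x \<in> X" "x' \<in> X" "strict_prefix x x'"
    then obtain w where w: "x' = x @ w" "w \<noteq> []"
      by (auto simp: strict_prefix_def prefix_def)
    have "x @ (w @ y0) \<in> conc X Y" using conc_memI[OF x(2) y0] w by simp
    then have "w @ y0 \<in> Y" using lq x(1) unfolding lquot_def by blast
    then have "x = x'" using unique x(1,2) y0 w(1) by (metis append.assoc)
    then show False using w by simp
  qed
  moreover have "suffix_code Y"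
    unfolding suffix_code_def
  proof (intro conjI ballI impI ne)
    fix y y'
    assume y: "y \<in> Y" "y' \<in> Y" "strict_suffix y y'"
    then obtain w where w: "y' = w @ y" "w \<noteq> []"
      by (auto simp: strict_suffix_def suffix_def)
    have "(x0 @ w) @ y \<in> conc X Y" using conc_memI[OF x0 y(2)] w by simp
    then have "x0 @ w \<in> X" using rq y(1) unfolding rquot_def by blast
    then have "y = y'" using unique y(1,2) x0 w(1) by (metis append.assoc)
    then show False using w by simp
  qed
  moreover have "code (conc X Y)"
    using sa unfolding strong_alternative_code_def alternative_code_def by blast
  ultimately show "X \<noteq> {} \<and> Y \<noteq> {} \<and> prefix_code X \<and> suffix_code Y \<and> code (conc X Y)"
    using ne by blast
next
  assume "X \<noteq> {} \<and> Y \<noteq> {} \<and> prefix_code X \<and> suffix_code Y \<and> code (conc X Y)"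
  then have ne: "X \<noteq> {}" "Y \<noteq> {}" and X: "prefix_code X" and Y: "suffix_code Y"
    and "code (conc X Y)"
    by blast+
  moreover have "[] \<notin> X" "[] \<notin> Y"
    using X Y unfolding prefix_code_def suffix_code_def by blast+
  moreover have "lquot X (conc X Y) \<subseteq> Y"
    using prefix_code_append_cancel[OF X]
    unfolding lquot_def by (blast elim: conc_memE)
  moreover have "rquot (conc X Y) Y \<subseteq> X"
    using suffix_code_append_cancel[OF Y]
    unfolding rquot_def by (blast elim: conc_memE)
  moreover have "\<forall>x\<in>X. \<forall>y\<in>Y. \<forall>x'\<in>X. \<forall>y'\<in>Y. x @ y = x' @ y' \<longrightarrow> x = x' \<and> y = y'"
    using prefix_code_append_cancel[OF X] by blast
  ultimately show "strong_alternative_code X Y"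
    unfolding strong_alternative_code_def alternative_code_def by blast
qed

lemma strong_alternative_prefix_code_iff:
  assumes "X \<noteq> {}" "Y \<noteq> {}"
  shows "strong_alternative_code X Y \<and> prefix_code (conc X Y) \<longleftrightarrow> prefix_code X \<and> bifix_code Y"
proof
  assume "strong_alternative_code X Y \<and> prefix_code (conc X Y)"
  with assms(1) show "prefix_code X \<and> bifix_code Y"
    unfolding strong_alternative_code_iff bifix_code_def
    using prefix_code_conc_imp_prefix_code_right suffix_code_def by blast
next
  assume "prefix_code X \<and> bifix_code Y"
  then have "prefix_code X" "prefix_code Y" "suffix_code Y"
    unfolding bifix_code_def by blast+
  with assms show "strong_alternative_code X Y \<and> prefix_code (conc X Y)"
    unfolding strong_alternative_code_iff using prefix_code_conc prefix_code_imp_code by blast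
qed

lemma strong_alternative_suffix_code_iff:
  assumes "X \<noteq> {}" "Y \<noteq> {}"
  shows "strong_alternative_code X Y \<and> suffix_code (conc X Y) \<longleftrightarrow> bifix_code X \<and> suffix_code Y"
proof
  assume "strong_alternative_code X Y \<and> suffix_code (conc X Y)"
  with assms(2) show "bifix_code X \<and> suffix_code Y"
    unfolding strong_alternative_code_iff bifix_code_def
    using suffix_code_conc_imp_suffix_code_left prefix_code_def by blast
next
  assume "bifix_code X \<and> suffix_code Y"
  then have "prefix_code X" "suffix_code X" "suffix_code Y"
    unfolding bifix_code_def by blast+
  with assms show "strong_alternative_code X Y \<and> suffix_code (conc X Y)"
    unfolding strong_alternative_code_iff using suffix_code_conc suffix_code_imp_code by blast
qed

lemma strong_alternative_bifix_code_iff: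
  assumes "X \<noteq> {}" "Y \<noteq> {}"
  shows "strong_alternative_code X Y \<and> bifix_code (conc X Y) \<longleftrightarrow> bifix_code X \<and> bifix_code Y"
  using strong_alternative_prefix_code_iff[OF assms] strong_alternative_suffix_code_iff[OF assms]
  unfolding bifix_code_def by auto

section \<open>Maximal prefix and suffix codes\<close>

definition prefix_complete :: "'a list set \<Rightarrow> bool" where
  "prefix_complete X \<longleftrightarrow> (\<forall>w. \<exists>x\<in>X. prefix x w \<or> prefix w x)"

definition suffix_complete :: "'a list set \<Rightarrow> bool" where
  "suffix_complete X \<longleftrightarrow> (\<forall>w. \<exists>x\<in>X. suffix x w \<or> suffix w x)"

lemma prefix_code_insert:
  "prefix_code X \<Longrightarrow> w \<noteq> [] \<Longrightarrow> \<forall>x\<in>X. \<not> prefix x w \<and> \<not> prefix w x \<Longrightarrow>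
     prefix_code (insert w X)"
  unfolding prefix_code_def strict_prefix_def by auto

lemma suffix_code_insert:
  "suffix_code X \<Longrightarrow> w \<noteq> [] \<Longrightarrow> \<forall>x\<in>X. \<not> suffix x w \<and> \<not> suffix w x \<Longrightarrow>
     suffix_code (insert w X)"
  unfolding suffix_code_def strict_suffix_def by auto

lemma not_prefix_complete_nonempty_witness:
  assumes "\<not> prefix_complete X"
  obtains w where "w \<noteq> []" "\<forall>x\<in>X. \<not> prefix x w \<and> \<not> prefix w x"
proof -
  obtain w where w: "\<forall>x\<in>X. \<not> prefix x w \<and> \<not> prefix w x"
    using assms unfolding prefix_complete_def by blast
  then have "\<forall>x\<in>X. \<not> prefix x (w @ [a]) \<and> \<not> prefix (w @ [a]) x" for a
    by (auto dest: prefix_snocD simp: strict_prefix_def)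
  then show thesis using that by blast
qed

lemma not_suffix_complete_nonempty_witness:
  assumes "\<not> suffix_complete X"
  obtains w where "w \<noteq> []" "\<forall>x\<in>X. \<not> suffix x w \<and> \<not> suffix w x"
proof -
  obtain w where w: "\<forall>x\<in>X. \<not> suffix x w \<and> \<not> suffix w x"
    using assms unfolding suffix_complete_def by blast
  then have "\<forall>x\<in>X. \<not> suffix x (a # w) \<and> \<not> suffix (a # w) x" for a
    by (auto dest: suffix_ConsD simp: suffix_Cons)
  then show thesis using that by blast
qed

lemma maximal_prefix_code_iff_prefix_complete:
  assumes "prefix_code X"
  shows "maximal_prefix_code X \<longleftrightarrow> prefix_complete X"
proof
  assume max: "maximal_prefix_code X"
  show "prefix_complete X"
  proof (rule ccontr)
    assume "\<not> prefix_complete X"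
    then obtain w where w: "w \<noteq> []" "\<forall>x\<in>X. \<not> prefix x w \<and> \<not> prefix w x"
      by (rule not_prefix_complete_nonempty_witness)
    then have "insert w X = X"
      using max prefix_code_insert[OF assms] unfolding maximal_prefix_code_def by blast
    then show False using w(2) by blast
  qed
next
  assume "prefix_complete X"
  then have "Z \<subseteq> X" if "prefix_code Z" "X \<subseteq> Z" for Z
    using that prefix_code_prefix_eq unfolding prefix_complete_def by blast
  with assms show "maximal_prefix_code X"
    unfolding maximal_prefix_code_def by blast
qed

lemma maximal_suffix_code_iff_suffix_complete:
  assumes "suffix_code X"
  shows "maximal_suffix_code X \<longleftrightarrow> suffix_complete X"
proof
  assume max: "maximal_suffix_code X"
  show "suffix_complete X"
  proof (rule ccontr)
    assume "\<not> suffix_complete X"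
    then obtain w where w: "w \<noteq> []" "\<forall>x\<in>X. \<not> suffix x w \<and> \<not> suffix w x"
      by (rule not_suffix_complete_nonempty_witness)
    then have "insert w X = X"
      using max suffix_code_insert[OF assms] unfolding maximal_suffix_code_def by blast
    then show False using w(2) by blast
  qed
next
  assume "suffix_complete X"
  then have "Z \<subseteq> X" if "suffix_code Z" "X \<subseteq> Z" for Z
    using that suffix_code_suffix_eq unfolding suffix_complete_def by blast
  with assms show "maximal_suffix_code X"
    unfolding maximal_suffix_code_def by blast
qed

lemma prefix_comparable_append_left:
  "prefix (x @ y) w \<or> prefix w (x @ y) \<Longrightarrow> prefix x w \<or> prefix w x"
  using append_prefixD prefix_same_cases[of w "x @ y" x] by auto

lemma suffix_comparable_append_right:
  "suffix (x @ y) w \<or> suffix w (x @ y) \<Longrightarrow> suffix y w \<or> suffix w y"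
  using suffix_appendD suffix_same_cases[of w "x @ y" y] by auto

lemma prefix_complete_conc:
  assumes "prefix_code X"
  shows "prefix_complete (conc X Y) \<longleftrightarrow> prefix_complete X \<and> prefix_complete Y"
proof
  assume c: "prefix_complete (conc X Y)"
  have "\<exists>x\<in>X. prefix x w \<or> prefix w x" for w
    using c prefix_comparable_append_left unfolding prefix_complete_def by (blast elim: conc_memE)
  moreover have "\<exists>y\<in>Y. prefix y w \<or> prefix w y" for w
  proof -
    obtain x0 where x0: "x0 \<in> X"
      using c unfolding prefix_complete_def conc_def by blast
    obtain x y where xy: "x \<in> X" "y \<in> Y" "prefix (x @ y) (x0 @ w) \<or> prefix (x0 @ w) (x @ y)"
      using c unfolding prefix_complete_def by (blast elim: conc_memE)
    have "prefix x (x0 @ w) \<or> prefix (x0 @ w) x"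
      using prefix_comparable_append_left[OF xy(3)] .
    then have "prefix x x0 \<or> prefix x0 x"
      using prefix_same_cases[of x0 "x0 @ w" x] prefix_order.trans[of x0 "x0 @ w" x] by auto
    then have "x = x0" using prefix_code_prefix_eq[OF assms] xy(1) x0 by metis
    then show ?thesis using xy by auto
  qed
  ultimately show "prefix_complete X \<and> prefix_complete Y"
    unfolding prefix_complete_def by blast
next
  assume c: "prefix_complete X \<and> prefix_complete Y"
  have "\<exists>z\<in>conc X Y. prefix z w \<or> prefix w z" for w
  proof -
    obtain x where x: "x \<in> X" "prefix x w \<or> prefix w x"
      using c unfolding prefix_complete_def by blast
    show ?thesis
    proof (cases "prefix x w")
      case True
      then obtain u where u: "w = x @ u" by (auto simp: prefix_def)
      obtain y where "y \<in> Y" "prefix y u \<or> prefix u y"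
        using c unfolding prefix_complete_def by blast
      then have "prefix (x @ y) w \<or> prefix w (x @ y)" using u by auto
      then show ?thesis using conc_memI[OF x(1) \<open>y \<in> Y\<close>] by blast
    next
      case False
      obtain y where "y \<in> Y" using c unfolding prefix_complete_def by blast
      moreover have "prefix w (x @ y)" using False x(2) by simp
      ultimately show ?thesis using conc_memI[OF x(1)] by blast
    qed
  qed
  then show "prefix_complete (conc X Y)"
    unfolding prefix_complete_def by blast
qed

lemma suffix_complete_conc:
  assumes "suffix_code Y"
  shows "suffix_complete (conc X Y) \<longleftrightarrow> suffix_complete X \<and> suffix_complete Y"
proof
  assume c: "suffix_complete (conc X Y)"
  have "\<exists>y\<in>Y. suffix y w \<or> suffix w y" for w
    using c suffix_comparable_append_right unfolding suffix_complete_def by (blast elim: conc_memE)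
  moreover have "\<exists>x\<in>X. suffix x w \<or> suffix w x" for w
  proof -
    obtain y0 where y0: "y0 \<in> Y"
      using c unfolding suffix_complete_def conc_def by blast
    obtain x y where xy: "x \<in> X" "y \<in> Y" "suffix (x @ y) (w @ y0) \<or> suffix (w @ y0) (x @ y)"
      using c unfolding suffix_complete_def by (blast elim: conc_memE)
    have "suffix y (w @ y0) \<or> suffix (w @ y0) y"
      using suffix_comparable_append_right[OF xy(3)] .
    moreover have "suffix y0 (w @ y0)" by (rule suffixI) simp
    ultimately have "suffix y y0 \<or> suffix y0 y"
      using suffix_same_cases[of y0 "w @ y0" y] suffix_order.trans[of y0 "w @ y0" y] by blast
    then have "y = y0" using suffix_code_suffix_eq[OF assms] xy(2) y0 by metis
    then show ?thesis using xy by auto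
  qed
  ultimately show "suffix_complete X \<and> suffix_complete Y"
    unfolding suffix_complete_def by blast
next
  assume c: "suffix_complete X \<and> suffix_complete Y"
  have "\<exists>z\<in>conc X Y. suffix z w \<or> suffix w z" for w
  proof -
    obtain y where y: "y \<in> Y" "suffix y w \<or> suffix w y"
      using c unfolding suffix_complete_def by blast
    show ?thesis
    proof (cases "suffix y w")
      case True
      then obtain u where u: "w = u @ y" by (auto simp: suffix_def)
      obtain x where "x \<in> X" "suffix x u \<or> suffix u x"
        using c unfolding suffix_complete_def by blast
      then have "suffix (x @ y) w \<or> suffix w (x @ y)" using u by (auto simp: suffix_def)
      then show ?thesis using conc_memI[OF \<open>x \<in> X\<close> y(1)] by blast
    next
      case False
      obtain x where "x \<in> X" using c unfolding suffix_complete_def by blast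
      moreover have "suffix w (x @ y)" using False y(2) by (simp add: suffix_appendI)
      ultimately show ?thesis using conc_memI[OF _ y(1)] by blast
    qed
  qed
  then show "suffix_complete (conc X Y)"
    unfolding suffix_complete_def by blast
qed

lemma maximal_prefix_code_conc:
  assumes "prefix_code X" "prefix_code Y"
  shows "maximal_prefix_code (conc X Y) \<longleftrightarrow> maximal_prefix_code X \<and> maximal_prefix_code Y"
  using assms prefix_code_conc[OF assms] prefix_complete_conc[OF assms(1)]
  by (simp add: maximal_prefix_code_iff_prefix_complete)

lemma maximal_suffix_code_conc:
  assumes "suffix_code X" "suffix_code Y"
  shows "maximal_suffix_code (conc X Y) \<longleftrightarrow> maximal_suffix_code X \<and> maximal_suffix_code Y"
  using assms suffix_code_conc[OF assms] suffix_complete_conc[OF assms(2)]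
  by (simp add: maximal_suffix_code_iff_suffix_complete)

lemma maximal_prefix_code_imp_prefix_code: "maximal_prefix_code X \<Longrightarrow> prefix_code X"
  unfolding maximal_prefix_code_def by blast

lemma maximal_suffix_code_imp_suffix_code: "maximal_suffix_code X \<Longrightarrow> suffix_code X"
  unfolding maximal_suffix_code_def by blast

lemma strong_alternative_maximal_prefix_code_iff:
  assumes "X \<noteq> {}" "Y \<noteq> {}"
  shows "strong_alternative_code X Y \<and> maximal_prefix_code (conc X Y) \<longleftrightarrow>
           maximal_prefix_code X \<and> maximal_prefix_code Y \<and> bifix_code Y"
proof -
  have "prefix_code X \<and> bifix_code Y \<Longrightarrow>
          maximal_prefix_code (conc X Y) \<longleftrightarrow> maximal_prefix_code X \<and> maximal_prefix_code Y"
    using maximal_prefix_code_conc unfolding bifix_code_def by blast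
  then show ?thesis
    using strong_alternative_prefix_code_iff[OF assms]
      maximal_prefix_code_imp_prefix_code[of "conc X Y"] maximal_prefix_code_imp_prefix_code[of X]
    by blast
qed

lemma strong_alternative_maximal_suffix_code_iff:
  assumes "X \<noteq> {}" "Y \<noteq> {}"
  shows "strong_alternative_code X Y \<and> maximal_suffix_code (conc X Y) \<longleftrightarrow>
           maximal_suffix_code X \<and> bifix_code X \<and> maximal_suffix_code Y"
proof -
  have "bifix_code X \<and> suffix_code Y \<Longrightarrow>
          maximal_suffix_code (conc X Y) \<longleftrightarrow> maximal_suffix_code X \<and> maximal_suffix_code Y"
    using maximal_suffix_code_conc unfolding bifix_code_def by blast
  then show ?thesis
    using strong_alternative_suffix_code_iff[OF assms]
      maximal_suffix_code_imp_suffix_code[of "conc X Y"] maximal_suffix_code_imp_suffix_code[of Y]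
    by blast
qed

lemma sublist_append_split: "sublist (a @ b) (c @ d) \<Longrightarrow> sublist a c \<or> sublist b d"
proof -
  assume "sublist (a @ b) (c @ d)"
  then obtain p q where pq: "c @ d = p @ a @ b @ q"
    unfolding sublist_def by auto
  show ?thesis
  proof (cases "length (p @ a) \<le> length c")
    case True
    have "prefix (p @ a) (c @ d)" unfolding pq by simp
    with True have "prefix (p @ a) c"
      using prefix_length_prefix[of "p @ a" "c @ d" c] by simp
    then show ?thesis unfolding sublist_def prefix_def by auto
  next
    case False
    have "suffix (b @ q) (c @ d)" unfolding pq by (rule suffixI[of _ "p @ a"]) simp
    moreover have "length (b @ q) \<le> length d" using False arg_cong[OF pq, of length] by simp
    ultimately have "suffix (b @ q) d"
      using suffix_length_suffix[of "b @ q" "c @ d" d] by (simp add: suffix_def)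
    then show ?thesis unfolding sublist_def suffix_def by auto
  qed
qed

lemma thin_conc_iff:
  assumes "X \<noteq> {}" "Y \<noteq> {}"
  shows "thin (conc X Y) \<longleftrightarrow> thin X \<and> thin Y"
proof
  assume "thin (conc X Y)"
  then obtain w where w: "\<forall>z\<in>conc X Y. \<not> sublist w z" unfolding thin_def by blast
  obtain x0 y0 where "x0 \<in> X" "y0 \<in> Y" using assms by blast
  have "\<not> sublist w x" if "x \<in> X" for x
    using w conc_memI[OF that \<open>y0 \<in> Y\<close>]
    by (meson sublist_append_rightI sublist_order.order.trans)
  moreover have "\<not> sublist w y" if "y \<in> Y" for y
    using w conc_memI[OF \<open>x0 \<in> X\<close> that]
    by (meson sublist_append_leftI sublist_order.order.trans)
  ultimately show "thin X \<and> thin Y" unfolding thin_def by blast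
next
  assume "thin X \<and> thin Y"
  then obtain w v where "\<forall>x\<in>X. \<not> sublist w x" "\<forall>y\<in>Y. \<not> sublist v y"
    unfolding thin_def by blast
  then have "\<forall>z\<in>conc X Y. \<not> sublist (w @ v) z"
    using sublist_append_split by (blast elim: conc_memE)
  then show "thin (conc X Y)" unfolding thin_def by blast
qed

lemma maximal_bifix_code_if_maximal_prefix_code:
  "maximal_prefix_code X \<Longrightarrow> bifix_code X \<Longrightarrow> maximal_bifix_code X"
  unfolding maximal_bifix_code_def maximal_prefix_code_def bifix_code_def by blast

lemma maximal_bifix_code_prefix_or_suffix_complete:
  assumes "maximal_bifix_code X"
  shows "prefix_complete X \<or> suffix_complete X"
proof (rule ccontr)
  assume "\<not> (prefix_complete X \<or> suffix_complete X)"
  then obtain u v where u: "u \<noteq> []" "\<forall>x\<in>X. \<not> prefix x u \<and> \<not> prefix u x"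
    and v: "\<forall>x\<in>X. \<not> suffix x v \<and> \<not> suffix v x"
    using not_prefix_complete_nonempty_witness not_suffix_complete_nonempty_witness by metis
  have X: "prefix_code X" "suffix_code X"
    using assms unfolding maximal_bifix_code_def bifix_code_def by blast+
  have "\<forall>x\<in>X. \<not> prefix x (u @ v) \<and> \<not> prefix (u @ v) x"
    using u(2) prefix_comparable_append_left by blast
  moreover have "\<forall>x\<in>X. \<not> suffix x (u @ v) \<and> \<not> suffix (u @ v) x"
    using v suffix_comparable_append_right by blast
  ultimately have "bifix_code (insert (u @ v) X)"
    using prefix_code_insert[OF X(1)] suffix_code_insert[OF X(2)] u(1)
    unfolding bifix_code_def by simp
  then have "u @ v \<in> X"
    using assms unfolding maximal_bifix_code_def by blast
  then show False using u(2) by force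
qed

section \<open>Thin maximal bifix codes are maximal prefix codes\<close>

definition star :: "'a list set \<Rightarrow> 'a list set" where
  "star X = concat ` lists X"

lemma Nil_in_star: "[] \<in> star X"
  unfolding star_def using image_eqI[of "[]" concat "[]" "lists X"] by simp

lemma in_star: "x \<in> X \<Longrightarrow> x \<in> star X"
  unfolding star_def using image_eqI[of x concat "[x]" "lists X"] by simp

lemma star_append: "u \<in> star X \<Longrightarrow> v \<in> star X \<Longrightarrow> u @ v \<in> star X"
  unfolding star_def by (auto intro!: image_eqI[where x = "_ @ _"])

lemma star_nonempty_has_prefix:
  assumes "r \<in> star X" "r \<noteq> []"
  shows "\<exists>x\<in>X. prefix x r"
proof -
  obtain xs where "xs \<in> lists X" "r = concat xs"
    using assms(1) unfolding star_def by blast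
  with assms(2) show ?thesis by (cases xs) (auto intro: prefixI)
qed

lemma star_append_cancel_left:
  assumes "prefix_code X" "p \<in> star X" "p @ r \<in> star X"
  shows "r \<in> star X"
proof -
  have "r \<in> star X" if "ps \<in> lists X" "qs \<in> lists X" "concat ps @ r = concat qs" for ps qs
    using that
  proof (induction ps arbitrary: qs rule: list.induct)
    case Nil
    then show ?case unfolding star_def by auto
  next
    case (Cons a as)
    have "a \<noteq> []" using Cons.prems(1) assms(1) unfolding prefix_code_def by auto
    then obtain b bs where qs: "qs = b # bs"
      using Cons.prems(3) by (cases qs) auto
    have "a @ (concat as @ r) = b @ concat bs" using Cons.prems(3) qs by simp
    then have "concat as @ r = concat bs"
      using prefix_code_append_cancel[OF assms(1)] Cons.prems(1,2) qs by auto
    then show ?case using Cons.IH[of bs] Cons.prems(1,2) qs by simp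
  qed
  with assms(2,3) show ?thesis unfolding star_def by blast
qed

lemma star_append_incomparable_inj:
  assumes X: "prefix_code X" and u: "\<forall>x\<in>X. \<not> prefix x u \<and> \<not> prefix u x"
    and "p \<in> star X" "p' \<in> star X" "p @ u @ q = p' @ u @ q'"
  shows "p = p'"
proof -
  have "p = p'"
    if "p \<in> star X" "p' \<in> star X" "p @ u @ q = p' @ u @ q'" "length p \<le> length p'"
    for p p' q q'
  proof (rule ccontr)
    assume "p \<noteq> p'"
    from that(3,4) have "prefix p p'"
      by (metis prefixI prefix_length_prefix)
    then obtain r where r: "p' = p @ r" by (auto simp: prefix_def)
    with \<open>p \<noteq> p'\<close> have "r \<noteq> []" by simp
    moreover have "r \<in> star X"
      using star_append_cancel_left[OF X that(1)] that(2) r by simp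
    ultimately obtain x where "x \<in> X" "prefix x r"
      using star_nonempty_has_prefix by blast
    moreover have "r @ u @ q' = u @ q" using that(3) r by simp
    ultimately have "prefix x (u @ q)" by (metis prefix_prefix)
    then show False
      using u \<open>x \<in> X\<close> prefix_same_cases[of x "u @ q" u] by auto
  qed
  then show ?thesis using assms(3-5) by (metis nat_le_linear)
qed

lemma suffix_complete_decomposition:
  assumes "suffix_complete X" "[] \<notin> X"
  obtains s y where "t = s @ y" "y \<in> star X" "\<exists>x\<in>X. suffix s x"
proof (induction t arbitrary: thesis rule: length_induct)
  case (1 t)
  obtain x where x: "x \<in> X" "suffix x t \<or> suffix t x"
    using assms(1) unfolding suffix_complete_def by blast
  show ?case
  proof (cases "suffix x t")
    case True
    then obtain t' where t': "t = t' @ x" by (auto simp: suffix_def)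
    with x(1) assms(2) have "length t' < length t" by (cases x) auto
    then obtain s y where "t' = s @ y" "y \<in> star X" "\<exists>x\<in>X. suffix s x"
      using "1.IH" by blast
    moreover have "t = s @ (y @ x)" using t' \<open>t' = s @ y\<close> by simp
    ultimately show ?thesis
      using "1.prems" star_append[OF _ in_star[OF x(1)]] by blast
  next
    case False
    then have "suffix t x" using x(2) by blast
    then show ?thesis using "1.prems"[of t "[]"] x(1) Nil_in_star by blast
  qed
qed

lemma finite_words_length: "finite {xs :: ('a::finite) list. length xs = n}"
  using finite_lists_length_eq[of "UNIV :: 'a set" n] by simp

lemma card_words_length: "card {xs :: ('a::finite) list. length xs = n} = card (UNIV :: 'a set) ^ n"
  using card_lists_length_eq[of "UNIV :: 'a set" n] by simp

lemma card_star_words_weighted_le: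
  fixes X :: "('a::finite) list set"
  assumes X: "prefix_code X" and u: "\<forall>x\<in>X. \<not> prefix x u \<and> \<not> prefix u x"
  shows "(\<Sum>j\<le>N. card {p \<in> star X. length p = j} * card (UNIV :: 'a set) ^ (N - j))
           \<le> card (UNIV :: 'a set) ^ (N + length u)"
proof -
  let ?C = "\<lambda>j. {p \<in> star X. length p = j}"
  let ?W = "\<lambda>n. {q :: 'a list. length q = n}"
  define T where "T = (\<Union>j\<le>N. ?C j \<times> ?W (N - j))"
  have finite_C: "finite (?C j)" for j
    by (rule finite_subset[OF _ finite_words_length[of j]]) auto
  have "card T = (\<Sum>j\<le>N. card (?C j \<times> ?W (N - j)))"
    unfolding T_def
    by (rule card_UN_disjoint) (auto simp: finite_C finite_words_length)
  also have "\<dots> = (\<Sum>j\<le>N. card (?C j) * card (UNIV :: 'a set) ^ (N - j))"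
    by (simp add: card_cartesian_product card_words_length)
  finally have card_T: "card T = \<dots>" .
  have "inj_on (\<lambda>(p, q). p @ u @ q) T"
  proof (rule inj_onI, clarify)
    fix p q p' q'
    assume "(p, q) \<in> T" "(p', q') \<in> T" "p @ u @ q = p' @ u @ q'"
    moreover from this have "p = p'"
      using star_append_incomparable_inj[OF X u] unfolding T_def by blast
    ultimately show "p = p' \<and> q = q'" by simp
  qed
  moreover have "(\<lambda>(p, q). p @ u @ q) ` T \<subseteq> ?W (N + length u)"
    unfolding T_def by auto
  ultimately have "card T \<le> card (?W (N + length u))"
    by (rule card_inj_on_le[OF _ _ finite_words_length])
  then show ?thesis using card_T by (simp add: card_words_length)
qed

lemma card_words_le_star_words:
  fixes X :: "('a::finite) list set"
  assumes X: "suffix_complete X" "[] \<notin> X" and w: "\<forall>x\<in>X. \<not> sublist w x" and "length w \<le> n"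
  shows "card (UNIV :: 'a set) ^ (n - length w) \<le> (\<Sum>i<length w. card {y \<in> star X. length y = n - i})"
proof -
  let ?C = "\<lambda>j. {y \<in> star X. length y = j}"
  define V where "V = (\<lambda>r. w @ r) ` {r :: 'a list. length r = n - length w}"
  define D where "D = (\<Union>i<length w. {take i w} \<times> ?C (n - i))"
  have card_V: "card V = card (UNIV :: 'a set) ^ (n - length w)"
    unfolding V_def by (simp add: card_image inj_on_def card_words_length)
  have "V \<subseteq> (\<lambda>(s, y). s @ y) ` D"
  proof
    fix t assume "t \<in> V"
    then obtain r where r: "t = w @ r" "length r = n - length w"
      unfolding V_def by auto
    obtain s y where sy: "t = s @ y" "y \<in> star X" "\<exists>x\<in>X. suffix s x"
      using suffix_complete_decomposition[OF X] by blast
    have short: "length s < length w"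
    proof (rule ccontr)
      assume "\<not> length s < length w"
      with sy(1) r(1) have "prefix w s"
        by (metis not_less prefixI prefix_length_prefix)
      then show False
        using sy(3) w by (meson prefix_imp_sublist suffix_imp_sublist sublist_order.order.trans)
    qed
    then have "s = take (length s) w"
      using sy(1) r(1) by (metis append_eq_append_conv_if take_all_iff nat_less_le)
    moreover have "length y = n - length s"
      using sy(1) r assms(4) by (metis add_diff_cancel_left' length_append le_add_diff_inverse)
    ultimately have "(s, y) \<in> D"
      unfolding D_def using short sy(2) by auto
    then show "t \<in> (\<lambda>(s, y). s @ y) ` D" using sy(1) by force
  qed
  moreover have "finite D"
    unfolding D_def by (auto intro: finite_subset[OF _ finite_words_length])
  ultimately have "card V \<le> card D"
    by (meson card_image_le card_mono finite_imageI le_trans)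
  also have "\<dots> \<le> (\<Sum>i<length w. card ({take i w} \<times> ?C (n - i)))"
    unfolding D_def by (rule card_UN_le) simp
  also have "\<dots> = (\<Sum>i<length w. card (?C (n - i)))"
    by (simp add: card_cartesian_product)
  finally show ?thesis using card_V by simp
qed

text \<open>In terms of the densities \<open>c j / k ^ j\<close>: the first bound says that they have a sum at
  most \<open>k ^ m\<close>, the second that any \<open>L\<close> consecutive ones sum to at least \<open>k ^ - L\<close>.\<close>

lemma density_bounds_contradiction:
  fixes c :: "nat \<Rightarrow> nat" and k L m :: nat
  assumes k: "k \<ge> 1"
    and upper: "\<And>N. (\<Sum>j\<le>N. c j * k ^ (N - j)) \<le> k ^ (N + m)"
    and lower: "\<And>n. L \<le> n \<Longrightarrow> k ^ (n - L) \<le> (\<Sum>i<L. c (n - i))"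
  shows False
proof -
  define N where "N = L + L * k ^ (m + L)"
  define g where "g j = c j * k ^ (N - j)" for j
  have window: "k ^ (N - L) \<le> (\<Sum>i<L. g (n - i))" if "L \<le> n" "n \<le> N" for n
  proof -
    have "k ^ (N - L) = k ^ (n - L) * k ^ (N - n)"
      using that by (simp add: power_add[symmetric])
    also have "\<dots> \<le> (\<Sum>i<L. c (n - i) * k ^ (N - n))"
      using mult_right_mono[OF lower[OF that(1)], of "k ^ (N - n)"] by (simp add: sum_distrib_right)
    also have "\<dots> \<le> (\<Sum>i<L. g (n - i))"
      unfolding g_def using k that by (intro sum_mono mult_le_mono2 power_increasing) auto
    finally show ?thesis .
  qed
  have "(N + 1 - L) * k ^ (N - L) = (\<Sum>n\<in>{L..N}. k ^ (N - L))"
    by simp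
  also have "\<dots> \<le> (\<Sum>n\<in>{L..N}. \<Sum>i<L. g (n - i))"
    using window by (intro sum_mono) auto
  also have "\<dots> = (\<Sum>i<L. \<Sum>n\<in>{L..N}. g (n - i))"
    by (rule sum.swap)
  also have "\<dots> \<le> (\<Sum>i<L. \<Sum>j\<le>N. g j)"
  proof (rule sum_mono)
    fix i assume "i \<in> {..<L}"
    then have "inj_on (\<lambda>n. n - i) {L..N}" by (auto simp: inj_on_def)
    then have "(\<Sum>n\<in>{L..N}. g (n - i)) = (\<Sum>j\<in>(\<lambda>n. n - i) ` {L..N}. g j)"
      by (simp add: sum.reindex)
    also have "\<dots> \<le> (\<Sum>j\<le>N. g j)" by (rule sum_mono2) auto
    finally show "(\<Sum>n\<in>{L..N}. g (n - i)) \<le> (\<Sum>j\<le>N. g j)" .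
  qed
  also have "\<dots> \<le> L * k ^ (N + m)"
    using upper[of N] unfolding g_def by simp
  also have "\<dots> = (L * k ^ (m + L)) * k ^ (N - L)"
    unfolding N_def by (simp add: power_add[symmetric] algebra_simps)
  finally have "N + 1 - L \<le> L * k ^ (m + L)"
    using k by simp
  then show False unfolding N_def by simp
qed

lemma thin_suffix_complete_prefix_code_imp_prefix_complete:
  fixes X :: "('a::finite) list set"
  assumes X: "prefix_code X" "thin X" "suffix_complete X"
  shows "prefix_complete X"
proof (rule ccontr)
  assume "\<not> prefix_complete X"
  then obtain u where u: "\<forall>x\<in>X. \<not> prefix x u \<and> \<not> prefix u x"
    unfolding prefix_complete_def by blast
  obtain w where w: "\<forall>x\<in>X. \<not> sublist w x"
    using X(2) unfolding thin_def by blast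
  have "[] \<notin> X" using X(1) unfolding prefix_code_def by blast
  show False
  proof (rule density_bounds_contradiction)
    show "card (UNIV :: 'a set) \<ge> 1" by (simp add: Suc_le_eq card_gt_0_iff)
  qed (fact card_star_words_weighted_le[OF X(1) u] card_words_le_star_words[OF X(3) \<open>[] \<notin> X\<close> w])+
qed

lemma thin_maximal_bifix_code_iff:
  fixes X :: "('a::finite) list set"
  assumes "thin X"
  shows "maximal_bifix_code X \<longleftrightarrow> maximal_prefix_code X \<and> bifix_code X"
proof
  assume max: "maximal_bifix_code X"
  then have "bifix_code X"
    unfolding maximal_bifix_code_def by blast
  moreover from this have "prefix_complete X"
    using max assms maximal_bifix_code_prefix_or_suffix_complete
      thin_suffix_complete_prefix_code_imp_prefix_complete
    unfolding bifix_code_def by blast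
  ultimately show "maximal_prefix_code X \<and> bifix_code X"
    using maximal_prefix_code_iff_prefix_complete unfolding bifix_code_def by blast
qed (use maximal_bifix_code_if_maximal_prefix_code in blast)

lemma strong_alternative_thin_maximal_bifix_code_iff:
  fixes X Y :: "('a::finite) list set"
  assumes "X \<noteq> {}" "Y \<noteq> {}"
  shows "strong_alternative_code X Y \<and> thin (conc X Y) \<and> maximal_bifix_code (conc X Y) \<longleftrightarrow>
           thin X \<and> maximal_bifix_code X \<and> thin Y \<and> maximal_bifix_code Y"
proof -
  have "bifix_code X \<and> bifix_code Y \<Longrightarrow>
          maximal_prefix_code (conc X Y) \<longleftrightarrow> maximal_prefix_code X \<and> maximal_prefix_code Y"
    using maximal_prefix_code_conc unfolding bifix_code_def by blast
  then show ?thesis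
    using strong_alternative_bifix_code_iff[OF assms] thin_conc_iff[OF assms]
      thin_maximal_bifix_code_iff[of X] thin_maximal_bifix_code_iff[of Y]
      thin_maximal_bifix_code_iff[of "conc X Y"]
    by blast
qed

theorem theoremT:
  fixes X Y :: "('a::finite) list set"
  assumes "X \<noteq> {}" and "Y \<noteq> {}" and "[] \<notin> X" and "[] \<notin> Y"
  shows
    "((strong_alternative_code X Y \<and> prefix_code (conc X Y))
        \<longleftrightarrow> (prefix_code X \<and> bifix_code Y))
   \<and> ((strong_alternative_code X Y \<and> maximal_prefix_code (conc X Y))
        \<longleftrightarrow> (maximal_prefix_code X \<and> maximal_prefix_code Y \<and> bifix_code Y))
   \<and> ((strong_alternative_code X Y \<and> suffix_code (conc X Y))
        \<longleftrightarrow> (bifix_code X \<and> suffix_code Y))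
   \<and> ((strong_alternative_code X Y \<and> maximal_suffix_code (conc X Y))
        \<longleftrightarrow> (maximal_suffix_code X \<and> bifix_code X \<and> maximal_suffix_code Y))
   \<and> ((strong_alternative_code X Y \<and> bifix_code (conc X Y))
        \<longleftrightarrow> (bifix_code X \<and> bifix_code Y))
   \<and> ((strong_alternative_code X Y \<and> thin (conc X Y) \<and> maximal_bifix_code (conc X Y))
        \<longleftrightarrow> (thin X \<and> maximal_bifix_code X \<and> thin Y \<and> maximal_bifix_code Y))"
  by (intro conjI strong_alternative_prefix_code_iff strong_alternative_maximal_prefix_code_iff
      strong_alternative_suffix_code_iff strong_alternative_maximal_suffix_code_iff
      strong_alternative_bifix_code_iff strong_alternative_thin_maximal_bifix_code_iff assms(1,2))

end
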